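(* Let $\xi:[0,\ell)\to\mathbb{R}^n$ be a self-contracted curve and $\tau\in[0,\ell)$. Let $$\Delta:=\Big\{\tfrac{\xi(t)-\xi(\tau)}{\|\xi(t)-\xi(\tau)\|}\ :\ t\in(\tau,\ell),\ \xi(t)\ne\xi(\tau)\Big\}\subset\mathbb{S}^{n-1},$$ and let $\bar v_\tau\in\mathbb{S}^{n-1}$ be any vector with $\angle(\bar v_\tau,w)\le\theta_n$ for all $w\in\Delta$, where $\theta_n=\arccos((2\cdot3^n)^{-1})$ (such a vector exists). Put $\varepsilon_n:=(\cos\theta_n)/3=(2\cdot3^{n+1})^{-1}$. Then for every $T\in(\tau,\ell)$ and every $v\in\mathbb{S}^{n-1}$ with $\|v-\bar v_\tau\|\le\varepsilon_n$, $$\big|\Pi_v(\Xi(T))\big|\le\big|\Pi_v(\Xi(\tau))\big|-\varepsilon_n\|\xi(T)-\xi(\tau)\|$$ (with the convention that the inequality is trivially true if $|\Pi_v(\Xi(\tau))|=\infty$).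
   Context: Let $(X,d)$ be a metric space and $\ell\in(0,\infty]$. A map $\xi:[0,\ell)\to X$ (not necessarily continuous) is called self-contracted if $d(\xi(t_2),\xi(t_3))\le d(\xi(t_1),\xi(t_3))$ for all $0\le t_1\le t_2\le t_3<\ell$. For $t\in[0,\ell)$, $\Xi(t):=\xi([t,\ell))$. Here $X=\mathbb{R}^n$ with Euclidean norm $\|\cdot\|$, inner product $\langle\cdot,\cdot\rangle$; $\mathbb{S}^{n-1}$ is the unit sphere and $\angle$ the Euclidean angle. For $v\in\mathbb{S}^{n-1}$ and $\Omega\subset\mathbb{R}^n$, $\Pi_v(\Omega)\subset\mathbb{R}$ is the closed convex hull (smallest closed interval) containing $\{\langle x,v\rangle: x\in\Omega\}$, and $|\cdot|$ denotes one-dimensional Lebesgue measure. *)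

theory Defs
  imports "HOL-Analysis.Analysis"
begin

definition param_dom :: "ereal \<Rightarrow> real set" where
  "param_dom l = {t. 0 \<le> t \<and> ereal t < l}"

definition self_contracted :: "ereal \<Rightarrow> (real \<Rightarrow> 'a::metric_space) \<Rightarrow> bool" where
  "self_contracted l \<xi> \<longleftrightarrow>
     (\<forall>t1 t2 t3. t1 \<in> param_dom l \<and> t2 \<in> param_dom l \<and> t3 \<in> param_dom l \<and>
        t1 \<le> t2 \<and> t2 \<le> t3 \<longrightarrow> dist (\<xi> t2) (\<xi> t3) \<le> dist (\<xi> t1) (\<xi> t3))"

definition tail_set :: "ereal \<Rightarrow> (real \<Rightarrow> 'a) \<Rightarrow> real \<Rightarrow> 'a set" where
  "tail_set l \<xi> t = \<xi> ` {s. t \<le> s \<and> ereal s < l}"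

text \<open>Pi_v(Omega): smallest closed interval (closed convex hull) containing the projections.\<close>
definition proj_hull :: "'a::real_inner \<Rightarrow> 'a set \<Rightarrow> real set" where
  "proj_hull v \<Omega> = closure (convex hull ((\<lambda>x. inner x v) ` \<Omega>))"

definition eangle :: "'a::real_inner \<Rightarrow> 'a \<Rightarrow> real" where
  "eangle u w = arccos (inner u w / (norm u * norm w))"

definition theta_n :: "nat \<Rightarrow> real" where
  "theta_n n = arccos (1 / (2 * 3 ^ n))"

definition eps_n :: "nat \<Rightarrow> real" where
  "eps_n n = cos (theta_n n) / 3"

end

theory Submission
  imports Defs
begin

text \<open>Put \<open>c = cos \<theta>\<^sub>n\<close>. Every chord \<open>\<xi>(t) - \<xi>(\<tau>)\<close>, \<open>t > \<tau>\<close>, makes an angle at most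
  \<open>\<theta>\<^sub>n\<close> with \<open>vbar\<close>, so its component along \<open>vbar\<close> is at least \<open>c\<close> times its length, and
  along the perturbed direction \<open>v\<close> at least \<open>2c/3\<close> times its length. Self-contractedness
  gives \<open>\<parallel>\<xi>(T) - \<xi>(\<tau>)\<parallel> \<le> 2\<parallel>\<xi>(t) - \<xi>(\<tau>)\<parallel>\<close> for \<open>t \<ge> T\<close>, hence the projection of \<open>\<Xi>(T)\<close>
  onto \<open>v\<close> lies at least \<open>(c/3)\<parallel>\<xi>(T) - \<xi>(\<tau>)\<parallel>\<close> beyond that of \<open>\<xi>(\<tau>)\<close>, and the gap
  in between belongs to \<open>\<Pi>\<^sub>v(\<Xi>(\<tau>))\<close> but not to \<open>\<Pi>\<^sub>v(\<Xi>(T))\<close>.\<close>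

lemma cos_theta_n: "cos (theta_n n) = 1 / (2 * 3 ^ n)"
proof -
  have "(1::real) \<le> 2 * 3 ^ n"
    using one_le_power[of "3::real" n] by linarith
  then have "-1 \<le> 1 / (2 * 3 ^ n :: real)" "1 / (2 * 3 ^ n :: real) \<le> 1"
    by (simp_all add: order_trans[OF _ zero_le_divide_1_iff[THEN iffD2]])
  then show ?thesis
    unfolding theta_n_def by (rule cos_arccos)
qed

lemma cos_theta_n_pos: "0 < cos (theta_n n)"
  by (simp add: cos_theta_n)

lemma theta_n_eq_arccos_cos: "theta_n n = arccos (cos (theta_n n))"
  by (subst cos_theta_n) (simp add: theta_n_def)

lemma cos_mult_norm_le_inner:
  fixes u x :: "'a::real_inner"
  assumes "norm u = 1" and "-1 \<le> c" "c \<le> 1"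
    and "eangle u (x /\<^sub>R norm x) \<le> arccos c"
  shows "c * norm x \<le> inner x u"
proof (cases "x = 0")
  case True
  then show ?thesis by simp
next
  case False
  define w where "w = x /\<^sub>R norm x"
  have w: "norm w = 1" using False by (simp add: w_def)
  have "\<bar>inner u w\<bar> \<le> 1"
    using Cauchy_Schwarz_ineq2[of u w] w assms(1) by simp
  moreover have "arccos (inner u w) \<le> arccos c"
    using assms(4) w assms(1) by (simp add: eangle_def flip: w_def)
  ultimately have "c \<le> inner u w"
    using arccos_le_mono assms(2,3) by (metis abs_le_iff minus_le_iff)
  then have "c * norm x \<le> inner u w * norm x"
    by (simp add: mult_right_mono)
  also have "\<dots> = inner x u"
    using False by (simp add: w_def inner_commute)
  finally show ?thesis .
qed

lemma inner_lower_bound_perturb: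
  fixes x u v :: "'a::real_inner"
  assumes "a * norm x \<le> inner x u" and "norm (v - u) \<le> \<delta>"
  shows "(a - \<delta>) * norm x \<le> inner x v"
proof -
  have "\<bar>inner x (v - u)\<bar> \<le> norm x * \<delta>"
    using Cauchy_Schwarz_ineq2[of x "v - u"] assms(2)
    by (meson mult_left_mono norm_ge_zero order_trans)
  then show ?thesis
    using assms(1) by (simp add: inner_diff_right algebra_simps)
qed

lemma self_contracted_dist_le_twice:
  assumes "self_contracted l \<xi>" and "\<tau> \<in> param_dom l"
    and "\<tau> \<le> T" "T \<le> t" "ereal t < l"
  shows "dist (\<xi> T) (\<xi> \<tau>) \<le> 2 * dist (\<xi> t) (\<xi> \<tau>)"
proof -
  have "ereal T < l"
    using assms(4,5) by (meson ereal_less_eq(3) le_less_trans)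
  then have "T \<in> param_dom l" "t \<in> param_dom l"
    using assms(2-5) by (auto simp: param_dom_def)
  then have "dist (\<xi> T) (\<xi> t) \<le> dist (\<xi> \<tau>) (\<xi> t)"
    using assms(1-4) unfolding self_contracted_def by blast
  then show ?thesis
    using dist_triangle[of "\<xi> T" "\<xi> \<tau>" "\<xi> t"] by (simp add: dist_commute)
qed

lemma self_contracted_tail_inner_gap:
  fixes \<xi> :: "real \<Rightarrow> 'a::real_inner"
  assumes "self_contracted l \<xi>" and "\<tau> \<in> param_dom l" and "\<tau> < T"
    and cone: "\<And>t. \<tau> < t \<Longrightarrow> ereal t < l \<Longrightarrow> a * norm (\<xi> t - \<xi> \<tau>) \<le> inner (\<xi> t - \<xi> \<tau>) v"
    and "0 \<le> a" and "T \<le> t" "ereal t < l"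
  shows "inner (\<xi> \<tau>) v + a / 2 * norm (\<xi> T - \<xi> \<tau>) \<le> inner (\<xi> t) v"
proof -
  have "norm (\<xi> T - \<xi> \<tau>) \<le> 2 * norm (\<xi> t - \<xi> \<tau>)"
    using self_contracted_dist_le_twice[OF assms(1,2)] assms(3,6,7) by (simp add: dist_norm)
  then have "a / 2 * norm (\<xi> T - \<xi> \<tau>) \<le> a / 2 * (2 * norm (\<xi> t - \<xi> \<tau>))"
    using \<open>0 \<le> a\<close> by (intro mult_left_mono) simp_all
  also have "\<dots> = a * norm (\<xi> t - \<xi> \<tau>)"
    by simp
  also have "\<dots> \<le> inner (\<xi> t - \<xi> \<tau>) v"
    using cone assms(3,6,7) by simp
  finally show ?thesis
    by (simp add: inner_diff_left)
qed

lemma emeasure_closure_convex_hull_gap: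
  fixes A B :: "real set"
  assumes "A \<subseteq> B" and "p \<in> B" and "A \<noteq> {}"
    and above: "\<And>a. a \<in> A \<Longrightarrow> p + e \<le> a" and "0 \<le> e"
  shows "emeasure lborel (closure (convex hull A))
         \<le> emeasure lborel (closure (convex hull B)) - ennreal e"
proof -
  define HA where "HA = closure (convex hull A)"
  define HB where "HB = closure (convex hull B)"
  have "HA \<subseteq> HB"
    unfolding HA_def HB_def by (intro closure_mono hull_mono assms(1))
  have B_HB: "B \<subseteq> HB"
    unfolding HB_def by (meson closure_subset hull_subset subset_trans)
  obtain a where "a \<in> A"
    using assms(3) by blast
  have "{p..<p + e} \<subseteq> HB"
  proof
    fix x assume x: "x \<in> {p..<p + e}"
    have "is_interval HB"
      unfolding HB_def by (simp add: convex_closure is_interval_convex_1)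
    moreover have "p \<in> HB" "a \<in> HB"
      using assms(1,2) \<open>a \<in> A\<close> B_HB by auto
    moreover have "p \<le> x" "x \<le> a"
      using x above[OF \<open>a \<in> A\<close>] by auto
    ultimately show "x \<in> HB"
      unfolding is_interval_1 by blast
  qed
  have "convex hull A \<subseteq> {p + e..}"
    by (rule hull_minimal) (use above in auto)
  then have "HA \<subseteq> {p + e..}"
    unfolding HA_def by (intro closure_minimal) auto
  then have "emeasure lborel HA + emeasure lborel {p..<p + e} = emeasure lborel (HA \<union> {p..<p + e})"
    by (intro plus_emeasure) (auto simp: HA_def)
  also have "\<dots> \<le> emeasure lborel HB"
    using \<open>HA \<subseteq> HB\<close> \<open>{p..<p + e} \<subseteq> HB\<close> by (intro emeasure_mono) (auto simp: HB_def)
  finally have "emeasure lborel HA + ennreal e \<le> emeasure lborel HB"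
    using \<open>0 \<le> e\<close> by simp
  then show ?thesis
    unfolding HA_def HB_def by (simp add: ennreal_le_minus_iff)
qed

lemma proj_hull_tail_set_gap:
  assumes "\<tau> \<in> param_dom l" and "\<tau> \<le> T" "ereal T < l" and "0 \<le> e"
    and above: "\<And>t. T \<le> t \<Longrightarrow> ereal t < l \<Longrightarrow> inner (\<xi> \<tau>) v + e \<le> inner (\<xi> t) v"
  shows "emeasure lborel (proj_hull v (tail_set l \<xi> T))
         \<le> emeasure lborel (proj_hull v (tail_set l \<xi> \<tau>)) - ennreal e"
  unfolding proj_hull_def
proof (rule emeasure_closure_convex_hull_gap)
  show "(\<lambda>x. inner x v) ` tail_set l \<xi> T \<subseteq> (\<lambda>x. inner x v) ` tail_set l \<xi> \<tau>"
    unfolding tail_set_def using assms(2) by auto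
  show "inner (\<xi> \<tau>) v \<in> (\<lambda>x. inner x v) ` tail_set l \<xi> \<tau>"
    unfolding tail_set_def using assms(1) by (auto simp: param_dom_def)
  show "(\<lambda>x. inner x v) ` tail_set l \<xi> T \<noteq> {}"
    unfolding tail_set_def using assms(3) by auto
  show "inner (\<xi> \<tau>) v + e \<le> a" if "a \<in> (\<lambda>x. inner x v) ` tail_set l \<xi> T" for a
    using that above unfolding tail_set_def by auto
qed (rule assms(4))

theorem mainTheorem4:
  fixes \<xi> :: "real \<Rightarrow> real ^ 'n" and l :: ereal and \<tau> T :: real and vbar v :: "real ^ 'n"
  assumes "l > 0"
    and "self_contracted l \<xi>"
    and "\<tau> \<in> param_dom l"
    and "norm vbar = 1"
    and "\<forall>w \<in> {(\<xi> t - \<xi> \<tau>) /\<^sub>R norm (\<xi> t - \<xi> \<tau>) | t. \<tau> < t \<and> ereal t < l \<and> \<xi> t \<noteq> \<xi> \<tau>}.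
           eangle vbar w \<le> theta_n CARD('n)"
    and "\<tau> < T" and "ereal T < l"
    and "norm v = 1"
    and "norm (v - vbar) \<le> eps_n CARD('n)"
  shows "emeasure lborel (proj_hull v (tail_set l \<xi> T))
         \<le> emeasure lborel (proj_hull v (tail_set l \<xi> \<tau>))
            - ennreal (eps_n CARD('n) * norm (\<xi> T - \<xi> \<tau>))"
proof -
  define c where "c = cos (theta_n CARD('n))"
  have c: "0 < c" "c \<le> 1" and eps: "eps_n CARD('n) = c / 3"
    by (simp_all add: c_def cos_theta_n_pos eps_n_def)
  have cone: "c * norm (\<xi> t - \<xi> \<tau>) \<le> inner (\<xi> t - \<xi> \<tau>) vbar"
    if "\<tau> < t" "ereal t < l" for t
  proof (cases "\<xi> t = \<xi> \<tau>")
    case False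
    then have "eangle vbar ((\<xi> t - \<xi> \<tau>) /\<^sub>R norm (\<xi> t - \<xi> \<tau>)) \<le> theta_n CARD('n)"
      using assms(5) that by blast
    then have "eangle vbar ((\<xi> t - \<xi> \<tau>) /\<^sub>R norm (\<xi> t - \<xi> \<tau>)) \<le> arccos c"
      by (simp only: c_def flip: theta_n_eq_arccos_cos)
    then show ?thesis
      using c by (intro cos_mult_norm_le_inner[OF assms(4)]) simp_all
  qed simp
  have "(c - c / 3) * norm (\<xi> t - \<xi> \<tau>) \<le> inner (\<xi> t - \<xi> \<tau>) v"
    if "\<tau> < t" "ereal t < l" for t
    using cone[OF that] assms(9) unfolding eps by (rule inner_lower_bound_perturb)
  then have gap: "inner (\<xi> \<tau>) v + c / 3 * norm (\<xi> T - \<xi> \<tau>) \<le> inner (\<xi> t) v"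
    if "T \<le> t" "ereal t < l" for t
    using self_contracted_tail_inner_gap[OF assms(2,3,6), of "c - c / 3"] c that by simp
  show ?thesis
    unfolding eps using c
    by (intro proj_hull_tail_set_gap[OF assms(3) less_imp_le[OF assms(6)] assms(7)] gap) simp_all
qed

end
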